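(* Suppose exclusion, random assignment and consistency hold, and let $\mathcal P$ be the induced observed law. Then for every $y'\in\{0,\dots,n-2\}$, every $j'\in[\ell]$ and every non-constant $(j_0,\dots,j_{n-1})\in([\ell]\setminus\{j'\})^n$, $$p_{y'1,j'}\le\sum_{j\in\{j_0,\dots,j_{n-1}\}}p_{y'1,j}+\sum_{y=0}^{n-1}p_{y0,j_y},$$ where the first sum runs over the set of distinct values among $j_0,\dots,j_{n-1}$. Moreover, none of these inequalities is implied by the others (for each one there is an observed law satisfying all the other inequalities of this family but violating it), and their total number is $(n-1)\ell\big((\ell-1)^n-(\ell-1)\big)$.
   Context: $D\in\{0,1\}$ treatment; $Y$ outcome with values $\gamma_0<\dots<\gamma_{n-1}$; instrument $Z$ with values in $[\ell]=\{0,\dots,\ell-1\}$, $\mathcal P(Z=z)>0$; $[n]=\{0,\dots,n-1\}$. Potential outcomes $Y^{(d,z)}$, potential treatments $D^{(z)}$. Exclusion: $Y^{(d,z)}=Y^{(d,z')}$ a.s. for all $z,z',d$ (written $Y^{(d)}$). Random assignment: $Z\perp(Y^{(0)},Y^{(1)},D^{(0)},\dots,D^{(\ell-1)})$. Consistency: $Y=(1-D)Y^{(0)}+DY^{(1)}$, $D=\sum_z\mathbb 1(Z=z)D^{(z)}$. $p_{yd,z}=\mathcal P(Y=\gamma_y,D=d\mid Z=z)$. A tuple is non-constant if not all entries are equal. *)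

theory Defs
  imports "HOL-Probability.Probability"
begin

definition obs_law_of :: "'a measure \<Rightarrow> ('a \<Rightarrow> real) \<Rightarrow> ('a \<Rightarrow> nat) \<Rightarrow> ('a \<Rightarrow> nat)
    \<Rightarrow> (nat \<Rightarrow> real) \<Rightarrow> nat \<Rightarrow> nat \<Rightarrow> nat \<Rightarrow> real" where
  "obs_law_of M Y D Z g y d z =
     measure M {\<omega> \<in> space M. Y \<omega> = g y \<and> D \<omega> = d \<and> Z \<omega> = z}
     / measure M {\<omega> \<in> space M. Z \<omega> = z}"

definition nonconstant :: "nat list \<Rightarrow> bool" where
  "nonconstant js \<longleftrightarrow> (\<exists>i<length js. \<exists>k<length js. js ! i \<noteq> js ! k)"

text \<open>The inequality indexed by (y', j', js) for an observed law p (p y d z = p_{yd,z}).\<close>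
definition iv_ineq :: "nat \<Rightarrow> (nat \<Rightarrow> nat \<Rightarrow> nat \<Rightarrow> real) \<Rightarrow> nat \<times> nat \<times> nat list \<Rightarrow> bool" where
  "iv_ineq n p idx = (case idx of (y', j', js) \<Rightarrow>
     p y' 1 j' \<le> (\<Sum>j\<in>set js. p y' 1 j) + (\<Sum>y<n. p y 0 (js ! y)))"

definition iv_family :: "nat \<Rightarrow> nat \<Rightarrow> (nat \<times> nat \<times> nat list) set" where
  "iv_family n l = {(y', j', js). y' + 2 \<le> n \<and> j' < l \<and> length js = n
      \<and> set js \<subseteq> {..<l} - {j'} \<and> nonconstant js}"

definition obs_law :: "nat \<Rightarrow> nat \<Rightarrow> (nat \<Rightarrow> nat \<Rightarrow> nat \<Rightarrow> real) \<Rightarrow> bool" where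
  "obs_law n l p \<longleftrightarrow> (\<forall>z<l. (\<forall>y<n. \<forall>d<2. 0 \<le> p y d z) \<and> (\<Sum>y<n. \<Sum>d<2. p y d z) = 1)"

end

theory Submission
  imports Defs
begin

(* Validity: random assignment turns p_{yd,z} into P(Y^(d) = g y, D^(z) = d), a statement about
   potential outcomes only. If Y^(1) = g y' and D^(j') = 1, then either D^(j) = 1 for some j in js,
   an event counted by the first sum, or D^(j) = 0 for all j in js; in the latter case Y^(0) = g y for
   some y, and the event of p_{y0, js!y} occurs. Subadditivity of the probability gives the inequality.
   The count: n - 1 choices of y', l of j', and (l-1)^n - (l-1) non-constant tuples over l - 1 values. *)

lemma nonconstant_iff: "nonconstant xs \<longleftrightarrow> (\<exists>a\<in>set xs. \<exists>b\<in>set xs. a \<noteq> b)"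
  unfolding nonconstant_def by (metis in_set_conv_nth)

lemma constant_lists_eq_replicate:
  assumes "0 < n"
  shows "{xs. length xs = n \<and> set xs \<subseteq> A \<and> \<not> nonconstant xs} = (\<lambda>a. replicate n a) ` A"
proof (intro set_eqI iffI)
  fix xs assume xs: "xs \<in> {xs. length xs = n \<and> set xs \<subseteq> A \<and> \<not> nonconstant xs}"
  then have "xs \<noteq> []" using assms by auto
  then have "xs = replicate n (hd xs)"
    using xs replicate_length_same[of xs "hd xs"] by (auto simp: nonconstant_iff)
  moreover have "hd xs \<in> A" using xs \<open>xs \<noteq> []\<close> by auto
  ultimately show "xs \<in> (\<lambda>a. replicate n a) ` A" by blast
qed (use assms in \<open>auto simp: nonconstant_iff\<close>)

lemma card_nonconstant_lists:
  assumes "finite A" "0 < n"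
  shows "card {xs. length xs = n \<and> set xs \<subseteq> A \<and> nonconstant xs} = card A ^ n - card A"
proof -
  have "{xs. length xs = n \<and> set xs \<subseteq> A \<and> nonconstant xs}
      = {xs. set xs \<subseteq> A \<and> length xs = n} - (\<lambda>a. replicate n a) ` A"
    using constant_lists_eq_replicate[OF assms(2), of A] by blast
  moreover have "(\<lambda>a. replicate n a) ` A \<subseteq> {xs. set xs \<subseteq> A \<and> length xs = n}" by auto
  moreover have "card ((\<lambda>a. replicate n a) ` A) = card A"
    using assms(2) by (intro card_image) (auto simp: inj_on_def)
  ultimately show ?thesis
    using assms(1) by (simp add: card_Diff_subset finite_lists_length_eq card_lists_length_eq)
qed

lemma card_iv_family: "card (iv_family n l) = (n - 1) * l * ((l - 1) ^ n - (l - 1))"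
proof (cases "2 \<le> n")
  case False
  then have "iv_family n l = {}" unfolding iv_family_def by auto
  then show ?thesis using False by simp
next
  case True
  define c where "c = (l - 1) ^ n - (l - 1)"
  define L where "L j' = {js. length js = n \<and> set js \<subseteq> {..<l} - {j'} \<and> nonconstant js}" for j'
  have "iv_family n l = (SIGMA y':{..<n-1}. SIGMA j':{..<l}. L j')"
    unfolding iv_family_def L_def by auto
  moreover have "finite (L j')" for j'
    unfolding L_def by (rule finite_subset[OF _ finite_lists_length_eq[of "{..<l} - {j'}" n]]) auto
  moreover have "card (L j') = c" if "j' < l" for j'
    unfolding L_def c_def using card_nonconstant_lists[of "{..<l} - {j'}" n] True that by simp
  ultimately show ?thesis unfolding c_def[symmetric] by (simp add: card_SigmaI)
qed

(* At instrument value j' the law is uniform on the cells (y, [y = y']); at any other value z it is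
   uniform on the untreated cells y with js ! y \<noteq> z, of which there is one as js is non-constant.
   Every term on the right of the inequality (y', j', js) then vanishes, while for another tuple ks
   with the same (y', j') some u has ks ! u \<noteq> js ! u, and the term p_{u0, ks!u} alone is \<ge> 1/n. *)
definition iv_witness :: "nat \<Rightarrow> nat \<Rightarrow> nat \<Rightarrow> nat list \<Rightarrow> nat \<Rightarrow> nat \<Rightarrow> nat \<Rightarrow> real" where
  "iv_witness n y' j' js y d z =
     (if z = j' then
        (if y < n \<and> d = (if y = y' then 1 else 0) then 1 / real n else 0)
      else if y < n \<and> d = 0 \<and> js ! y \<noteq> z then
        1 / real (card {u. u < n \<and> js ! u \<noteq> z})
      else 0)"

lemma iv_witness_nonneg: "0 \<le> iv_witness n y' j' js y d z"
  by (simp add: iv_witness_def)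

lemma sum_lessThan_2: "(\<Sum>d<(2::nat). f d) = f 0 + (f 1 :: 'a :: comm_monoid_add)"
  by (simp add: numeral_2_eq_2)

lemma obs_law_iv_witness:
  assumes "length js = n" "nonconstant js"
  shows "obs_law n l (iv_witness n y' j' js)"
proof -
  have "(\<Sum>y<n. \<Sum>d<2. iv_witness n y' j' js y d z) = 1" for z
  proof (cases "z = j'")
    case True
    have "(\<Sum>d<2. iv_witness n y' j' js y d z) = 1 / real n" if "y < n" for y
      using that True by (simp add: sum_lessThan_2 iv_witness_def)
    moreover have "0 < n" using assms by (auto simp: nonconstant_def)
    ultimately show ?thesis by simp
  next
    case False
    let ?T = "{u. u < n \<and> js ! u \<noteq> z}"
    obtain a b where "a \<in> set js" "b \<in> set js" "a \<noteq> b"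
      using assms(2) by (auto simp: nonconstant_iff)
    then have "?T \<noteq> {}" using assms(1) by (auto simp: in_set_conv_nth)
    have "(\<Sum>y<n. \<Sum>d<2. iv_witness n y' j' js y d z)
        = (\<Sum>y<n. if y \<in> ?T then 1 / real (card ?T) else 0)"
      using False by (intro sum.cong) (auto simp: sum_lessThan_2 iv_witness_def)
    also have "\<dots> = (\<Sum>y\<in>?T. 1 / real (card ?T))"
      by (simp add: sum.If_cases Int_def conj_commute)
    also have "\<dots> = 1" using \<open>?T \<noteq> {}\<close> by auto
    finally show ?thesis .
  qed
  then show ?thesis unfolding obs_law_def by (simp add: iv_witness_nonneg)
qed

lemma iv_witness_violates:
  assumes "y' < n" "length js = n" "j' \<notin> set js"
  shows "\<not> iv_ineq n (iv_witness n y' j' js) (y', j', js)"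
proof -
  have "(\<Sum>j\<in>set js. iv_witness n y' j' js y' 1 j) = 0"
    using assms(3) by (intro sum.neutral) (auto simp: iv_witness_def)
  moreover have "(\<Sum>y<n. iv_witness n y' j' js y 0 (js ! y)) = 0"
    using assms(2,3) by (intro sum.neutral) (auto simp: iv_witness_def)
  moreover have "iv_witness n y' j' js y' 1 j' > 0"
    using assms(1) by (simp add: iv_witness_def)
  ultimately show ?thesis unfolding iv_ineq_def by simp
qed

lemma iv_witness_satisfies:
  assumes "length js = n" "length ks = n" "j'' \<notin> set ks" "(y'', j'', ks) \<noteq> (y', j', js)"
  shows "iv_ineq n (iv_witness n y' j' js) (y'', j'', ks)"
proof -
  let ?p = "iv_witness n y' j' js"
  have rhs_nonneg: "0 \<le> (\<Sum>j\<in>set ks. ?p y'' 1 j)" "0 \<le> (\<Sum>y<n. ?p y 0 (ks ! y))"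
    by (simp_all add: sum_nonneg iv_witness_nonneg)
  show ?thesis
  proof (cases "(y'', j'') = (y', j')")
    case False
    then have "?p y'' 1 j'' = 0" by (auto simp: iv_witness_def)
    then show ?thesis unfolding iv_ineq_def using rhs_nonneg by simp
  next
    case True
    then have "ks \<noteq> js" using assms(4) by auto
    then obtain u where u: "u < n" "ks ! u \<noteq> js ! u"
      using assms(1,2) nth_equalityI[of ks js] by auto
    let ?T = "{v. v < n \<and> js ! v \<noteq> ks ! u}"
    have "ks ! u \<noteq> j'" using True u assms(2,3) by auto
    then have pu: "?p u 0 (ks ! u) = 1 / real (card ?T)"
      using u by (simp add: iv_witness_def)
    have "u \<in> ?T" using u by simp
    then have "0 < card ?T" by (auto simp: card_gt_0_iff)
    moreover have "card ?T \<le> n" using card_mono[of "{..<n}" ?T] by auto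
    ultimately have "?p y'' 1 j'' \<le> 1 / real (card ?T)"
      by (auto simp: iv_witness_def frac_le)
    also have "\<dots> \<le> (\<Sum>y<n. ?p y 0 (ks ! y))"
      unfolding pu[symmetric] using u by (intro member_le_sum) (auto simp: iv_witness_nonneg)
    finally show ?thesis unfolding iv_ineq_def using rhs_nonneg by simp
  qed
qed

lemma iv_family_irredundant:
  assumes "i \<in> iv_family n l"
  shows "\<exists>p. obs_law n l p \<and> \<not> iv_ineq n p i \<and> (\<forall>k \<in> iv_family n l - {i}. iv_ineq n p k)"
proof -
  obtain y' j' js where i: "i = (y', j', js)" by (cases i)
  with assms have "y' < n" "length js = n" "j' \<notin> set js" "nonconstant js"
    unfolding iv_family_def by auto
  moreover have "iv_ineq n (iv_witness n y' j' js) k" if "k \<in> iv_family n l - {i}" for k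
    using that \<open>length js = n\<close> unfolding i iv_family_def by (auto intro: iv_witness_satisfies)
  ultimately show ?thesis unfolding i
    by (intro exI[of _ "iv_witness n y' j' js"] conjI ballI)
      (simp_all add: obs_law_iv_witness iv_witness_violates)
qed

locale iv_model = prob_space M for M :: "'a measure" +
  fixes Z D :: "'a \<Rightarrow> nat" and Y :: "'a \<Rightarrow> real"
    and YP :: "nat \<Rightarrow> nat \<Rightarrow> 'a \<Rightarrow> real" and DP :: "nat \<Rightarrow> 'a \<Rightarrow> nat"
    and g :: "nat \<Rightarrow> real" and n l :: nat
  assumes Z_meas: "Z \<in> measurable M (count_space UNIV)"
    and D_meas: "D \<in> measurable M (count_space UNIV)"
    and Y_meas: "Y \<in> borel_measurable M"
    and YP_meas: "\<And>d z. YP d z \<in> borel_measurable M"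
    and DP_meas: "\<And>z. DP z \<in> measurable M (count_space UNIV)"
    and Y_vals: "AE \<omega> in M. Y \<omega> \<in> g ` {..<n}"
    and D_vals: "AE \<omega> in M. D \<omega> \<in> {0, 1}"
    and DP_vals: "\<And>z. z < l \<Longrightarrow> AE \<omega> in M. DP z \<omega> \<in> {0, 1}"
    and Z_pos: "\<And>z. z < l \<Longrightarrow> measure M {\<omega> \<in> space M. Z \<omega> = z} > 0"
    and exclusion: "\<And>d z z'. d \<in> {0, 1} \<Longrightarrow> z < l \<Longrightarrow> z' < l \<Longrightarrow>
                      AE \<omega> in M. YP d z \<omega> = YP d z' \<omega>"
    and random_assignment: "indep_set
           {Z -` S \<inter> space M | S. True}
           {(\<lambda>\<omega>. (YP 0 0 \<omega>, YP 1 0 \<omega>, map (\<lambda>z. DP z \<omega>) [0..<l])) -` S \<inter> space M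
              | S. S \<in> sets (borel \<Otimes>\<^sub>M borel \<Otimes>\<^sub>M count_space UNIV)}"
    and consistency_Y: "AE \<omega> in M. Y \<omega> = (1 - real (D \<omega>)) * YP 0 (Z \<omega>) \<omega> + real (D \<omega>) * YP 1 (Z \<omega>) \<omega>"
    and consistency_D: "AE \<omega> in M. D \<omega> = (\<Sum>z<l. (if Z \<omega> = z then 1 else 0) * DP z \<omega>)"
begin

declare Z_meas [measurable] D_meas [measurable] Y_meas [measurable]
  YP_meas [measurable] DP_meas [measurable]

definition potential_outcomes :: "'a \<Rightarrow> real \<times> real \<times> nat list" where
  "potential_outcomes \<omega> = (YP 0 0 \<omega>, YP 1 0 \<omega>, map (\<lambda>z. DP z \<omega>) [0..<l])"

definition potential_event :: "nat \<Rightarrow> nat \<Rightarrow> nat \<Rightarrow> 'a set" where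
  "potential_event y d z = {\<omega> \<in> space M. YP d 0 \<omega> = g y \<and> DP z \<omega> = d}"

lemma potential_event_sets [measurable]: "potential_event y d z \<in> events"
  unfolding potential_event_def by measurable

lemma prob_instrument_inter_potential:
  assumes "Measurable.pred (borel \<Otimes>\<^sub>M borel \<Otimes>\<^sub>M count_space UNIV) P"
  shows "prob ({\<omega> \<in> space M. Z \<omega> = z} \<inter> {\<omega> \<in> space M. P (potential_outcomes \<omega>)})
       = prob {\<omega> \<in> space M. Z \<omega> = z} * prob {\<omega> \<in> space M. P (potential_outcomes \<omega>)}"
proof (rule indep_setD[OF random_assignment[folded potential_outcomes_def[abs_def]]])
  show "{\<omega> \<in> space M. Z \<omega> = z} \<in> {Z -` S \<inter> space M | S. True}"
    by (intro CollectI exI[of _ "{z}"]) auto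
  have "{x. P x} \<in> sets (borel \<Otimes>\<^sub>M borel \<Otimes>\<^sub>M count_space UNIV)"
    using assms by (simp add: pred_def space_pair_measure)
  then show "{\<omega> \<in> space M. P (potential_outcomes \<omega>)} \<in>
      {potential_outcomes -` S \<inter> space M | S. S \<in> sets (borel \<Otimes>\<^sub>M borel \<Otimes>\<^sub>M count_space UNIV)}"
    by (intro CollectI exI[of _ "{x. P x}"] conjI) auto
qed

lemma AE_observed_by_potential:
  assumes "z < l"
  shows "AE \<omega> in M. Z \<omega> = z \<longrightarrow> D \<omega> = DP z \<omega> \<and> Y \<omega> = YP (D \<omega>) 0 \<omega>"
proof -
  have "AE \<omega> in M. YP 0 z \<omega> = YP 0 0 \<omega>" "AE \<omega> in M. YP 1 z \<omega> = YP 1 0 \<omega>"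
    using exclusion assms by auto
  with consistency_Y consistency_D D_vals show ?thesis
  proof eventually_elim
    case (elim \<omega>)
    show ?case
    proof
      assume "Z \<omega> = z"
      with elim(2) assms have "D \<omega> = DP z \<omega>" by (simp add: of_bool_def[symmetric])
      moreover from \<open>Z \<omega> = z\<close> elim(1,3-5) have "Y \<omega> = YP (D \<omega>) 0 \<omega>" by auto
      ultimately show "D \<omega> = DP z \<omega> \<and> Y \<omega> = YP (D \<omega>) 0 \<omega>" ..
    qed
  qed
qed

lemma prob_instrument_inter_potential_event:
  assumes "d \<in> {0, 1}" "z' < l"
  shows "prob ({\<omega> \<in> space M. Z \<omega> = z} \<inter> potential_event y d z')
       = prob {\<omega> \<in> space M. Z \<omega> = z} * prob (potential_event y d z')"
proof -
  have "potential_event y d z' = {\<omega> \<in> space M.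
      (if d = 0 then fst (potential_outcomes \<omega>) else fst (snd (potential_outcomes \<omega>))) = g y
      \<and> snd (snd (potential_outcomes \<omega>)) ! z' = d}"
    using assms by (auto simp: potential_event_def potential_outcomes_def)
  then show ?thesis by (simp only:) (rule prob_instrument_inter_potential, measurable)
qed

lemma obs_law_eq_prob_potential_event:
  assumes "d \<in> {0, 1}" "z < l"
  shows "obs_law_of M Y D Z g y d z = prob (potential_event y d z)"
proof -
  let ?Z = "{\<omega> \<in> space M. Z \<omega> = z}"
  have "AE \<omega> in M. \<omega> \<in> {\<omega> \<in> space M. Y \<omega> = g y \<and> D \<omega> = d \<and> Z \<omega> = z}
      \<longleftrightarrow> \<omega> \<in> ?Z \<inter> potential_event y d z"
    using AE_observed_by_potential[OF assms(2)]
    by eventually_elim (auto simp: potential_event_def)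
  then have "measure M {\<omega> \<in> space M. Y \<omega> = g y \<and> D \<omega> = d \<and> Z \<omega> = z}
      = prob (?Z \<inter> potential_event y d z)"
    by (rule finite_measure_eq_AE) measurable
  also have "\<dots> = prob ?Z * prob (potential_event y d z)"
    by (rule prob_instrument_inter_potential_event[OF assms])
  finally show ?thesis
    using Z_pos[OF assms(2)] by (simp add: obs_law_of_def)
qed

(* Y^(0) is observed only where D = 0: the range condition on Y holds for Y^(0) on
   {Z = z, D^(z) = 0}, and independence from Z extends it to {D^(z) = 0} since P(Z = z) > 0. *)
lemma AE_untreated_potential_outcome_in_range:
  assumes "z < l"
  shows "AE \<omega> in M. DP z \<omega> = 0 \<longrightarrow> (\<exists>y<n. YP 0 0 \<omega> = g y)"
proof -
  let ?Z = "{\<omega> \<in> space M. Z \<omega> = z}"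
  let ?B = "{\<omega> \<in> space M. DP z \<omega> = 0 \<and> \<not> (\<exists>y<n. YP 0 0 \<omega> = g y)}"
  have "?B = {\<omega> \<in> space M. snd (snd (potential_outcomes \<omega>)) ! z = 0
      \<and> \<not> (\<exists>y<n. fst (potential_outcomes \<omega>) = g y)}"
    using assms by (simp add: potential_outcomes_def)
  then have indep: "prob (?Z \<inter> ?B) = prob ?Z * prob ?B"
    by (simp only:) (rule prob_instrument_inter_potential, measurable)
  have "AE \<omega> in M. \<omega> \<notin> ?Z \<inter> ?B"
    using AE_observed_by_potential[OF assms] Y_vals by eventually_elim auto
  then have "prob (?Z \<inter> ?B) = 0"
    by (subst prob_eq_0) measurable
  with indep Z_pos[OF assms] have "prob ?B = 0" by simp
  then have "AE \<omega> in M. \<omega> \<notin> ?B"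
    by (subst (asm) prob_eq_0) measurable
  with AE_space show ?thesis by eventually_elim auto
qed

lemma AE_potential_event_cover:
  assumes "length js = n" "0 < n" "set js \<subseteq> {..<l}"
  shows "AE \<omega> in M. \<omega> \<in> potential_event y' 1 j' \<longrightarrow>
    \<omega> \<in> (\<Union>j\<in>set js. potential_event y' 1 j) \<union> (\<Union>y<n. potential_event y 0 (js ! y))"
proof -
  have "js ! 0 \<in> set js" using assms(1,2) by simp
  then have "js ! 0 < l" using assms(3) by auto
  have "AE \<omega> in M. \<forall>j\<in>set js. DP j \<omega> \<in> {0, 1}"
    using assms(3) DP_vals by (intro AE_finite_allI) auto
  with AE_untreated_potential_outcome_in_range[OF \<open>js ! 0 < l\<close>] show ?thesis
  proof eventually_elim
    case (elim \<omega>)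
    show ?case
    proof
      assume \<omega>: "\<omega> \<in> potential_event y' 1 j'"
      show "\<omega> \<in> (\<Union>j\<in>set js. potential_event y' 1 j) \<union> (\<Union>y<n. potential_event y 0 (js ! y))"
      proof (cases "\<exists>j\<in>set js. DP j \<omega> = 1")
        case True
        with \<omega> show ?thesis by (auto simp: potential_event_def)
      next
        case False
        with elim(2) have untreated: "\<forall>j\<in>set js. DP j \<omega> = 0" by auto
        with elim(1) \<open>js ! 0 \<in> set js\<close> obtain y where "y < n" "YP 0 0 \<omega> = g y" by auto
        moreover have "DP (js ! y) \<omega> = 0" using untreated \<open>y < n\<close> assms(1) by simp
        ultimately show ?thesis using \<omega> by (auto simp: potential_event_def)
      qed
    qed
  qed
qed

lemma iv_ineq_obs_law:
  assumes "j' < l" "length js = n" "0 < n" "set js \<subseteq> {..<l}"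
  shows "iv_ineq n (obs_law_of M Y D Z g) (y', j', js)"
proof -
  let ?G = potential_event
  have "prob (?G y' 1 j') \<le> prob ((\<Union>j\<in>set js. ?G y' 1 j) \<union> (\<Union>y<n. ?G y 0 (js ! y)))"
    by (rule finite_measure_mono_AE[OF AE_potential_event_cover[OF assms(2-4)]]) measurable
  also have "\<dots> \<le> prob (\<Union>j\<in>set js. ?G y' 1 j) + prob (\<Union>y<n. ?G y 0 (js ! y))"
    by (rule measure_Un_le) measurable
  also have "\<dots> \<le> (\<Sum>j\<in>set js. prob (?G y' 1 j)) + (\<Sum>y<n. prob (?G y 0 (js ! y)))"
    by (intro add_mono finite_measure_subadditive_finite) auto
  finally show ?thesis
    using assms by (simp add: iv_ineq_def obs_law_eq_prob_potential_event subset_eq)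
qed

end

theorem theorem6:
  fixes M :: "'a measure"
    and Z D :: "'a \<Rightarrow> nat" and Y :: "'a \<Rightarrow> real"
    and YP :: "nat \<Rightarrow> nat \<Rightarrow> 'a \<Rightarrow> real"  \<comment> \<open>YP d z = Y^(d,z)\<close>
    and DP :: "nat \<Rightarrow> 'a \<Rightarrow> nat"                \<comment> \<open>DP z = D^(z)\<close>
    and g :: "nat \<Rightarrow> real" and n l :: nat
  assumes prob: "prob_space M"
    and Z_meas: "Z \<in> measurable M (count_space UNIV)"
    and D_meas: "D \<in> measurable M (count_space UNIV)"
    and Y_meas: "Y \<in> borel_measurable M"
    and YP_meas: "\<And>d z. YP d z \<in> borel_measurable M"
    and DP_meas: "\<And>z. DP z \<in> measurable M (count_space UNIV)"
    and g_mono: "strict_mono_on {..<n} g"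
    and Y_vals: "AE \<omega> in M. Y \<omega> \<in> g ` {..<n}"
    and D_vals: "AE \<omega> in M. D \<omega> \<in> {0, 1}"
    and DP_vals: "\<And>z. z < l \<Longrightarrow> AE \<omega> in M. DP z \<omega> \<in> {0, 1}"
    and Z_vals: "AE \<omega> in M. Z \<omega> < l"
    and Z_pos: "\<And>z. z < l \<Longrightarrow> measure M {\<omega> \<in> space M. Z \<omega> = z} > 0"
    and exclusion: "\<And>d z z'. d \<in> {0, 1} \<Longrightarrow> z < l \<Longrightarrow> z' < l \<Longrightarrow>
                      AE \<omega> in M. YP d z \<omega> = YP d z' \<omega>"
    and random_assignment: "prob_space.indep_set M
           {Z -` S \<inter> space M | S. True}
           {(\<lambda>\<omega>. (YP 0 0 \<omega>, YP 1 0 \<omega>, map (\<lambda>z. DP z \<omega>) [0..<l])) -` S \<inter> space M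
              | S. S \<in> sets (borel \<Otimes>\<^sub>M borel \<Otimes>\<^sub>M count_space UNIV)}"
    and consistency_Y: "AE \<omega> in M. Y \<omega> = (1 - real (D \<omega>)) * YP 0 (Z \<omega>) \<omega> + real (D \<omega>) * YP 1 (Z \<omega>) \<omega>"
    and consistency_D: "AE \<omega> in M. D \<omega> = (\<Sum>z<l. (if Z \<omega> = z then 1 else 0) * DP z \<omega>)"
  shows "(\<forall>i \<in> iv_family n l. iv_ineq n (obs_law_of M Y D Z g) i)
       \<and> (\<forall>i \<in> iv_family n l. \<exists>p. obs_law n l p \<and> \<not> iv_ineq n p i
             \<and> (\<forall>k \<in> iv_family n l - {i}. iv_ineq n p k))
       \<and> card (iv_family n l) = (n - 1) * l * ((l - 1) ^ n - (l - 1))"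
proof -
  interpret iv_model M Z D Y YP DP g n l
    by (intro iv_model.intro[OF prob] iv_model_axioms.intro) (fact assms)+
  have "iv_ineq n (obs_law_of M Y D Z g) (y', j', js)" if "(y', j', js) \<in> iv_family n l" for y' j' js
    using that by (intro iv_ineq_obs_law) (auto simp: iv_family_def)
  then have "\<forall>i \<in> iv_family n l. iv_ineq n (obs_law_of M Y D Z g) i" by auto
  then show ?thesis using iv_family_irredundant card_iv_family by blast
qed

end
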